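(* Let $e_1=(1:0:0)$, $e_2=(0:1:0)$, $e_3=(0:0:1)$, $e_4=(1:1:1)$ and $\mathcal S_1=\{e_1\}$, $\mathcal S_2=\{e_1,e_2\}$, $\mathcal S_3=\{e_1,e_2,e_3\}$, $\mathcal S_4=\{e_1,e_2,e_3,e_4\}$. Then for $i=1,2,3,4$ one has $\operatorname{span}(F_{\mathcal S_i})=I_{\mathcal S_i}$.
   Context: $H_k\subseteq\mathbb R[x,y,z]$: real ternary forms of degree $k$; $P_{3,4}=\{f\in H_4: f\ge0\text{ on }\mathbb P^2(\mathbb R)\}$. For $s\in\mathbb P^2(\mathbb R)$: $F_s=\{f\in P_{3,4}: f(s)=0\}$ and $I_s=\{f\in H_4: \operatorname{ord}_s(f)\ge2\}$, where $\operatorname{ord}_s(f)$ is the order of vanishing of $f$ at $s$ (least degree of a nonzero homogeneous component of $f$ in affine coordinates centered at $s$). For a finite set $\mathcal S=\{s_1,\dots,s_n\}$ of distinct real points, $F_{\mathcal S}=\bigcap_iF_{s_i}$ and $I_{\mathcal S}=\bigcap_iI_{s_i}$. *)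

theory Defs
  imports "HOL-Analysis.Analysis" "HOL-Library.Function_Algebras"
begin

text \<open>A real ternary form of degree 4 is represented by its coefficient function
  on exponent triples (a,b,c); the coefficient of x^a y^b z^c.\<close>

type_synonym form = "nat \<times> nat \<times> nat \<Rightarrow> real"

definition monos4 :: "(nat \<times> nat \<times> nat) set" where
  "monos4 = {(a,b,c). a + b + c = 4}"

definition H4 :: "form set" where
  "H4 = {f. \<forall>m. m \<notin> monos4 \<longrightarrow> f m = 0}"

definition evalf :: "form \<Rightarrow> real \<times> real \<times> real \<Rightarrow> real" where
  "evalf f = (\<lambda>(x,y,z). \<Sum>(a,b,c)\<in>monos4. f (a,b,c) * x ^ a * y ^ b * z ^ c)"

definition fscale :: "real \<Rightarrow> form \<Rightarrow> form" where
  "fscale c f = (\<lambda>m. c * f m)"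

abbreviation fspan :: "form set \<Rightarrow> form set" where
  "fspan \<equiv> module.span fscale"

lemma module_fscale: "module fscale"
  by unfold_locales (auto simp: fscale_def fun_eq_iff algebra_simps)

text \<open>Nonnegative quartics (nonnegativity on P^2(R) = on R^3, by homogeneity of even degree).\<close>
definition P34 :: "form set" where
  "P34 = {f \<in> H4. \<forall>v. evalf f v \<ge> 0}"

text \<open>Points of P^2(R) are given by nonzero representatives in R^3.\<close>
definition Fpt :: "real \<times> real \<times> real \<Rightarrow> form set" where
  "Fpt s = {f \<in> P34. evalf f s = 0}"

definition ord_ge2 :: "form \<Rightarrow> real \<times> real \<times> real \<Rightarrow> bool" where
  "ord_ge2 f s \<longleftrightarrow> evalf f s = 0 \<and> (evalf f has_derivative (\<lambda>_. 0)) (at s)"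

definition Ipt :: "real \<times> real \<times> real \<Rightarrow> form set" where
  "Ipt s = {f \<in> H4. ord_ge2 f s}"

definition FS :: "(real \<times> real \<times> real) set \<Rightarrow> form set" where
  "FS S = {f \<in> P34. \<forall>s\<in>S. f \<in> Fpt s}"

definition IS :: "(real \<times> real \<times> real) set \<Rightarrow> form set" where
  "IS S = {f \<in> H4. \<forall>s\<in>S. f \<in> Ipt s}"

end

theory Submission
  imports Defs
begin

(*
  span F_S \<subseteq> I_S holds for every S: a nonnegative form attains its minimum 0 at each point
  of S, so its derivative vanishes there, and I_S is a linear subspace.

  If p and q vanish on S, then the quartics
  p^2, q^2 and (p+q)^2 lie in F_S, so p*q = ((p+q)^2 - p^2 - q^2)/2 lies in span F_S
  (polarization).  When S consists of coordinate points, singularity at e_i kills exactly the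
  coefficients of monomials divisible by x_i^3; every remaining monomial is a product of two
  quadratic monomials vanishing on S, which settles S_1, S_2, S_3 (and every subset of
  {e1,e2,e3}).  For S_4, singularity at e4 = (1,1,1) leaves three free coefficients, and f is a
  combination of p^2, q^2 and p*q where p = xy - yz and q = xz - yz vanish at e1, ..., e4.
*)

fun mon :: "nat \<times> nat \<times> nat \<Rightarrow> real \<times> real \<times> real \<Rightarrow> real" where
  "mon (a, b, c) (x, y, z) = x ^ a * y ^ b * z ^ c"

fun dmon :: "nat \<times> nat \<times> nat \<Rightarrow> real \<times> real \<times> real \<Rightarrow> real \<times> real \<times> real \<Rightarrow> real" where
  "dmon (a, b, c) (x, y, z) (h, k, l) =
     real a * x ^ (a - 1) * y ^ b * z ^ c * h
   + real b * x ^ a * y ^ (b - 1) * z ^ c * k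
   + real c * x ^ a * y ^ b * z ^ (c - 1) * l"

lemma mon_has_derivative: "(mon m has_derivative dmon m v) (at v)"
proof -
  obtain a b c where m: "m = (a, b, c)" by (cases m) auto
  have "mon m = (\<lambda>v. fst v ^ a * fst (snd v) ^ b * snd (snd v) ^ c)"
    by (auto simp: m fun_eq_iff)
  moreover have "dmon m v = (\<lambda>h.
       real a * fst v ^ (a - 1) * fst (snd v) ^ b * snd (snd v) ^ c * fst h
     + real b * fst v ^ a * fst (snd v) ^ (b - 1) * snd (snd v) ^ c * fst (snd h)
     + real c * fst v ^ a * fst (snd v) ^ b * snd (snd v) ^ (c - 1) * snd (snd h))"
    by (cases v) (auto simp: m fun_eq_iff)
  ultimately show ?thesis
    by (simp only:) (rule derivative_eq_intros refl | simp add: algebra_simps)+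
qed

definition monos2 :: "(nat \<times> nat \<times> nat) set" where
  "monos2 = {(a, b, c). a + b + c = 2}"

lemma monos2_eq: "monos2 = {(2,0,0), (1,1,0), (1,0,1), (0,2,0), (0,1,1), (0,0,2)}"
  unfolding monos2_def
proof (intro set_eqI iffI)
  fix m :: "nat \<times> nat \<times> nat"
  assume "m \<in> {(a, b, c). a + b + c = 2}"
  then obtain a b c where m: "m = (a, b, c)" and deg: "a + b + c = 2" by auto
  have "a = 0 \<or> a = 1 \<or> a = 2" "b = 0 \<or> b = 1 \<or> b = 2" "c = 2 - a - b"
    using deg by arith+
  then show "m \<in> {(2,0,0), (1,1,0), (1,0,1), (0,2,0), (0,1,1), (0,0,2)}"
    using m deg by (elim disjE) auto
qed auto

lemma monos4_eq: "monos4 = {(4,0,0), (3,1,0), (3,0,1), (2,2,0), (2,1,1), (2,0,2), (1,3,0),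
  (1,2,1), (1,1,2), (1,0,3), (0,4,0), (0,3,1), (0,2,2), (0,1,3), (0,0,4)}"
  unfolding monos4_def
proof (intro set_eqI iffI)
  fix m :: "nat \<times> nat \<times> nat"
  assume "m \<in> {(a, b, c). a + b + c = 4}"
  then obtain a b c where m: "m = (a, b, c)" and deg: "a + b + c = 4" by auto
  have "a = 0 \<or> a = 1 \<or> a = 2 \<or> a = 3 \<or> a = 4" "b = 0 \<or> b = 1 \<or> b = 2 \<or> b = 3 \<or> b = 4"
    "c = 4 - a - b"
    using deg by arith+
  then show "m \<in> {(4,0,0), (3,1,0), (3,0,1), (2,2,0), (2,1,1), (2,0,2), (1,3,0),
    (1,2,1), (1,1,2), (1,0,3), (0,4,0), (0,3,1), (0,2,2), (0,1,3), (0,0,4)}"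
    using m deg by (elim disjE) auto
qed auto

lemma finite_monos4: "finite monos4"
  by (simp add: monos4_eq)

definition mprod :: "nat \<times> nat \<times> nat \<Rightarrow> nat \<times> nat \<times> nat \<Rightarrow> nat \<times> nat \<times> nat" where
  "mprod u w = (fst u + fst w, fst (snd u) + fst (snd w), snd (snd u) + snd (snd w))"

lemma mprod_monos2: "u \<in> monos2 \<Longrightarrow> w \<in> monos2 \<Longrightarrow> mprod u w \<in> monos4"
  by (auto simp: monos2_def monos4_def mprod_def)

lemma mon_mprod: "mon (mprod u w) v = mon u v * mon w v"
  by (cases u; cases w; cases v) (simp add: mprod_def power_add)

lemma evalf_monomials: "evalf f v = (\<Sum>m\<in>monos4. f m * mon m v)"
  by (cases v) (auto simp: evalf_def intro!: sum.cong)

lemma evalf_has_derivative: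
  "(evalf f has_derivative (\<lambda>h. \<Sum>m\<in>monos4. f m * dmon m v h)) (at v)"
  unfolding evalf_monomials[abs_def]
  by (intro has_derivative_sum has_derivative_mult_right mon_has_derivative)

lemma evalf_add: "evalf (f + g) v = evalf f v + evalf g v"
  by (simp add: evalf_monomials sum.distrib algebra_simps)

lemma evalf_diff: "evalf (f - g) v = evalf f v - evalf g v"
  by (simp add: evalf_monomials sum_subtractf algebra_simps)

lemma evalf_scale: "evalf (fscale c f) v = c * evalf f v"
  by (simp add: evalf_monomials fscale_def sum_distrib_left algebra_simps)

lemma H4_add: "f \<in> H4 \<Longrightarrow> g \<in> H4 \<Longrightarrow> f + g \<in> H4"
  and H4_diff: "f \<in> H4 \<Longrightarrow> g \<in> H4 \<Longrightarrow> f - g \<in> H4"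
  and H4_scale: "f \<in> H4 \<Longrightarrow> fscale c f \<in> H4"
  by (simp_all add: H4_def fscale_def)

definition delta :: "nat \<times> nat \<times> nat \<Rightarrow> form" where
  "delta m = (\<lambda>k. if k = m then 1 else 0)"

lemma H4_delta: "m \<in> monos4 \<Longrightarrow> delta m \<in> H4"
  by (auto simp: H4_def delta_def)

lemma evalf_delta:
  assumes "m \<in> monos4"
  shows "evalf (delta m) v = mon m v"
proof -
  have "evalf (delta m) v = (\<Sum>k\<in>monos4. if k = m then mon k v else 0)"
    unfolding evalf_monomials by (rule sum.cong) (auto simp: delta_def)
  also have "\<dots> = mon m v"
    using assms finite_monos4 by simp
  finally show ?thesis .
qed

lemma form_in_span_by_monomials:
  assumes "f \<in> H4" and "\<And>m. m \<in> monos4 \<Longrightarrow> f m \<noteq> 0 \<Longrightarrow> delta m \<in> fspan T"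
  shows "f \<in> fspan T"
proof -
  interpret M: module fscale by (rule module_fscale)
  have "(\<Sum>m\<in>monos4. fscale (f m) (delta m)) k = (\<Sum>m\<in>monos4. if k = m then f m else 0)" for k
    using finite_monos4 by (induction rule: finite_induct) (auto simp: fscale_def delta_def)
  also have "\<dots> k = f k" for k
  proof -
    have "k \<notin> monos4 \<Longrightarrow> f k = 0"
      using assms(1) unfolding H4_def by blast
    then show ?thesis using finite_monos4 by auto
  qed
  finally have expansion: "f = (\<Sum>m\<in>monos4. fscale (f m) (delta m))"
    by auto
  have "fscale (f m) (delta m) \<in> fspan T" if "m \<in> monos4" for m
  proof (cases "f m = 0")
    case True
    then have "fscale (f m) (delta m) = 0" by (simp add: fscale_def fun_eq_iff)
    then show ?thesis using M.span_zero by simp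
  next
    case False
    then show ?thesis using assms(2) that by (intro M.span_scale) auto
  qed
  then show ?thesis
    by (subst expansion) (rule M.span_sum)
qed

lemma ord_ge2_gradient:
  assumes "ord_ge2 f s"
  shows "evalf f s = 0" and "(\<Sum>m\<in>monos4. f m * dmon m s h) = 0"
proof -
  show "evalf f s = 0" using assms by (simp add: ord_ge2_def)
  have "(\<lambda>h. \<Sum>m\<in>monos4. f m * dmon m s h) = (\<lambda>_. 0)"
    using has_derivative_unique[OF evalf_has_derivative] assms by (auto simp: ord_ge2_def)
  then show "(\<Sum>m\<in>monos4. f m * dmon m s h) = 0" by metis
qed

subsection \<open>The span of F_S lies in I_S\<close>

text \<open>A nonnegative quartic attains its minimum at each of its zeros, so its derivative
  vanishes there.\<close>

lemma nonneg_zero_ord_ge2: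
  assumes "f \<in> P34" and "evalf f s = 0"
  shows "ord_ge2 f s"
proof -
  have "(\<lambda>h. \<Sum>m\<in>monos4. f m * dmon m s h) = (\<lambda>_. 0)"
    using assms
    by (intro differential_zero_maxmin[OF UNIV_I open_UNIV evalf_has_derivative])
      (auto simp: P34_def)
  then show ?thesis
    using evalf_has_derivative[of f s] assms(2) by (simp add: ord_ge2_def)
qed

lemma FS_subset_IS: "FS S \<subseteq> IS S"
  using nonneg_zero_ord_ge2 by (auto simp: FS_def IS_def Ipt_def Fpt_def P34_def)

text \<open>Being singular at a point is a linear condition, so I_S is a subspace.\<close>

lemma ord_ge2_add: "ord_ge2 f s \<Longrightarrow> ord_ge2 g s \<Longrightarrow> ord_ge2 (f + g) s"
  using has_derivative_add[of "evalf f" "\<lambda>_. 0" _ "evalf g" "\<lambda>_. 0"]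
  by (simp add: ord_ge2_def evalf_add[abs_def])

lemma ord_ge2_scale: "ord_ge2 f s \<Longrightarrow> ord_ge2 (fscale c f) s"
  using has_derivative_mult_right[of "evalf f" "\<lambda>_. 0" _ c]
  by (simp add: ord_ge2_def evalf_scale[abs_def])

lemma IS_subspace: "module.subspace fscale (IS S)"
proof -
  have "evalf 0 = (\<lambda>_. 0)"
    by (simp add: evalf_monomials[abs_def])
  then have "0 \<in> IS S"
    by (simp add: IS_def Ipt_def ord_ge2_def H4_def)
  then show ?thesis
    unfolding module.subspace_def[OF module_fscale]
    by (auto simp: IS_def Ipt_def intro: H4_add H4_scale ord_ge2_add ord_ge2_scale)
qed

lemma span_FS_subset_IS: "fspan (FS S) \<subseteq> IS S"
  by (rule module.span_minimal[OF module_fscale FS_subset_IS IS_subspace])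

subsection \<open>Products of functions vanishing on S lie in the span of F_S\<close>

lemma square_in_FS:
  assumes "g \<in> H4" and "\<And>v. evalf g v = (q v)\<^sup>2" and "\<And>s. s \<in> S \<Longrightarrow> q s = 0"
  shows "g \<in> FS S"
  using assms by (simp add: FS_def Fpt_def P34_def)

text \<open>Polarization: if \<open>gp\<close>, \<open>gq\<close>, \<open>gpq\<close> are quartics representing \<open>p\<^sup>2\<close>, \<open>q\<^sup>2\<close>, \<open>(p + q)\<^sup>2\<close>
  for functions p, q vanishing on S, then the quartic \<open>(gpq - gp - gq) / 2\<close>, which represents
  \<open>p * q\<close>, lies in the span of F_S.\<close>

lemma polarization_in_span_FS:
  assumes "gp \<in> H4" "gq \<in> H4" "gpq \<in> H4"
    and "\<And>v. evalf gp v = (p v)\<^sup>2" "\<And>v. evalf gq v = (q v)\<^sup>2"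
    and "\<And>v. evalf gpq v = (p v + q v)\<^sup>2"
    and "\<And>s. s \<in> S \<Longrightarrow> p s = 0 \<and> q s = 0"
  shows "fscale (1/2) (gpq - gp - gq) \<in> fspan (FS S)"
proof -
  interpret M: module fscale by (rule module_fscale)
  have "gp \<in> FS S" "gq \<in> FS S" "gpq \<in> FS S"
    using assms by (auto intro!: square_in_FS)
  then show ?thesis
    by (intro M.span_scale M.span_diff M.span_base)
qed

definition sqform :: "nat \<times> nat \<times> nat \<Rightarrow> nat \<times> nat \<times> nat \<Rightarrow> form" where
  "sqform u w = delta (mprod u u) + fscale 2 (delta (mprod u w)) + delta (mprod w w)"

lemma monomial_product_in_span_FS:
  assumes u: "u \<in> monos2" and w: "w \<in> monos2"
    and vanish: "\<And>s. s \<in> S \<Longrightarrow> mon u s = 0 \<and> mon w s = 0"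
  shows "delta (mprod u w) \<in> fspan (FS S)"
proof -
  have decomp: "delta (mprod u w) =
      fscale (1/2) (sqform u w - delta (mprod u u) - delta (mprod w w))"
    by (auto simp: fun_eq_iff fscale_def sqform_def delta_def)
  have "sqform u w \<in> H4"
    unfolding sqform_def using u w by (simp add: H4_add H4_scale H4_delta mprod_monos2)
  moreover have "evalf (sqform u w) v = (mon u v + mon w v)\<^sup>2" for v
    using u w by (simp add: sqform_def evalf_add evalf_scale evalf_delta mprod_monos2 mon_mprod
        power2_eq_square algebra_simps)
  moreover have "evalf (delta (mprod u u)) v = (mon u v)\<^sup>2" "evalf (delta (mprod w w)) v = (mon w v)\<^sup>2"
    for v
    using u w by (simp_all add: evalf_delta mprod_monos2 mon_mprod power2_eq_square)
  ultimately show ?thesis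
    unfolding decomp using u w vanish
    by (intro polarization_in_span_FS[where p = "mon u" and q = "mon w"])
      (auto simp: H4_delta mprod_monos2)
qed

subsection \<open>Coordinate points\<close>

lemma coefficients_vanish_at_coordinate_points:
  assumes m: "m \<in> monos4"
  shows "ord_ge2 f (1,0,0) \<Longrightarrow> 3 \<le> fst m \<Longrightarrow> f m = 0"
    and "ord_ge2 f (0,1,0) \<Longrightarrow> 3 \<le> fst (snd m) \<Longrightarrow> f m = 0"
    and "ord_ge2 f (0,0,1) \<Longrightarrow> 3 \<le> snd (snd m) \<Longrightarrow> f m = 0"
proof -
  assume ord: "ord_ge2 f (1,0,0)" and "3 \<le> fst m"
  have "f (4,0,0) = 0" "f (3,1,0) = 0" "f (3,0,1) = 0"
    using ord_ge2_gradient(1)[OF ord] ord_ge2_gradient(2)[OF ord, of "(0,1,0)"]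
      ord_ge2_gradient(2)[OF ord, of "(0,0,1)"]
    by (simp_all add: evalf_monomials monos4_eq)
  then show "f m = 0" using m \<open>3 \<le> fst m\<close> by (auto simp: monos4_eq)
next
  assume ord: "ord_ge2 f (0,1,0)" and "3 \<le> fst (snd m)"
  have "f (0,4,0) = 0" "f (1,3,0) = 0" "f (0,3,1) = 0"
    using ord_ge2_gradient(1)[OF ord] ord_ge2_gradient(2)[OF ord, of "(1,0,0)"]
      ord_ge2_gradient(2)[OF ord, of "(0,0,1)"]
    by (simp_all add: evalf_monomials monos4_eq)
  then show "f m = 0" using m \<open>3 \<le> fst (snd m)\<close> by (auto simp: monos4_eq)
next
  assume ord: "ord_ge2 f (0,0,1)" and "3 \<le> snd (snd m)"
  have "f (0,0,4) = 0" "f (1,0,3) = 0" "f (0,1,3) = 0"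
    using ord_ge2_gradient(1)[OF ord] ord_ge2_gradient(2)[OF ord, of "(1,0,0)"]
      ord_ge2_gradient(2)[OF ord, of "(0,1,0)"]
    by (simp_all add: evalf_monomials monos4_eq)
  then show "f m = 0" using m \<open>3 \<le> snd (snd m)\<close> by (auto simp: monos4_eq)
qed

lemma mon_vanishes_at_coordinate_points:
  assumes "u \<in> monos2"
  shows "fst u \<le> 1 \<Longrightarrow> mon u (1,0,0) = 0"
    and "fst (snd u) \<le> 1 \<Longrightarrow> mon u (0,1,0) = 0"
    and "snd (snd u) \<le> 1 \<Longrightarrow> mon u (0,0,1) = 0"
  using assms by (auto simp: monos2_eq)

lemma balanced_split:
  assumes "m \<in> monos4"
  shows "\<exists>u\<in>monos2. \<exists>w\<in>monos2. m = mprod u w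
    \<and> (fst m \<le> 2 \<longrightarrow> fst u \<le> 1 \<and> fst w \<le> 1)
    \<and> (fst (snd m) \<le> 2 \<longrightarrow> fst (snd u) \<le> 1 \<and> fst (snd w) \<le> 1)
    \<and> (snd (snd m) \<le> 2 \<longrightarrow> snd (snd u) \<le> 1 \<and> snd (snd w) \<le> 1)"
  using assms unfolding monos4_eq monos2_eq
  by (elim insertE emptyE; hypsubst; simp add: mprod_def)

theorem IS_subset_span_FS_coordinate_points:
  assumes S: "S \<subseteq> {(1,0,0), (0,1,0), (0,0,1)}"
  shows "IS S \<subseteq> fspan (FS S)"
proof
  fix f assume "f \<in> IS S"
  then have H: "f \<in> H4" and ord: "\<And>s. s \<in> S \<Longrightarrow> ord_ge2 f s"
    by (auto simp: IS_def Ipt_def)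
  show "f \<in> fspan (FS S)"
  proof (rule form_in_span_by_monomials[OF H])
    fix m assume m: "m \<in> monos4" and nonzero: "f m \<noteq> 0"
    have low: "(1,0,0) \<in> S \<Longrightarrow> fst m \<le> 2" "(0,1,0) \<in> S \<Longrightarrow> fst (snd m) \<le> 2"
      "(0,0,1) \<in> S \<Longrightarrow> snd (snd m) \<le> 2"
      using coefficients_vanish_at_coordinate_points[OF m, of f] ord nonzero by force+
    obtain u w where u: "u \<in> monos2" and w: "w \<in> monos2" and uw: "m = mprod u w"
      and bal: "fst m \<le> 2 \<longrightarrow> fst u \<le> 1 \<and> fst w \<le> 1"
        "fst (snd m) \<le> 2 \<longrightarrow> fst (snd u) \<le> 1 \<and> fst (snd w) \<le> 1"
        "snd (snd m) \<le> 2 \<longrightarrow> snd (snd u) \<le> 1 \<and> snd (snd w) \<le> 1"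
      using balanced_split[OF m] by blast
    have "mon u s = 0 \<and> mon w s = 0" if "s \<in> S" for s
      using S that low bal mon_vanishes_at_coordinate_points[OF u]
        mon_vanishes_at_coordinate_points[OF w] by auto
    then show "delta m \<in> fspan (FS S)"
      unfolding uw by (rule monomial_product_in_span_FS[OF u w])
  qed
qed

subsection \<open>Four points in general position\<close>

text \<open>The quadrics \<open>p = xy - yz\<close> and \<open>q = xz - yz\<close> vanish at \<open>e\<^sub>1, \<dots>, e\<^sub>4\<close>.  These are the
  coefficients of \<open>p\<^sup>2\<close>, \<open>q\<^sup>2\<close>, \<open>(p + q)\<^sup>2\<close>, and of \<open>p * q\<close> obtained by polarization.\<close>

definition p_sq :: form where
  "p_sq = delta (2,2,0) - fscale 2 (delta (1,2,1)) + delta (0,2,2)"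

definition q_sq :: form where
  "q_sq = delta (2,0,2) - fscale 2 (delta (1,1,2)) + delta (0,2,2)"

definition pq_sum_sq :: form where
  "pq_sum_sq = delta (2,2,0) + delta (2,0,2) + fscale 4 (delta (0,2,2))
    + fscale 2 (delta (2,1,1)) - fscale 4 (delta (1,2,1)) - fscale 4 (delta (1,1,2))"

definition pq_prod :: form where
  "pq_prod = fscale (1/2) (pq_sum_sq - p_sq - q_sq)"

lemma four_point_quadrics_in_span:
  defines "S \<equiv> {(1,0,0), (0,1,0), (0,0,1), (1,1,1)}"
  shows "p_sq \<in> fspan (FS S)" and "q_sq \<in> fspan (FS S)" and "pq_prod \<in> fspan (FS S)"
proof -
  define p :: "real \<times> real \<times> real \<Rightarrow> real" where "p = (\<lambda>(x, y, z). x * y - y * z)"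
  define q :: "real \<times> real \<times> real \<Rightarrow> real" where "q = (\<lambda>(x, y, z). x * z - y * z)"
  have forms: "p_sq \<in> H4" "q_sq \<in> H4" "pq_sum_sq \<in> H4"
    unfolding p_sq_def q_sq_def pq_sum_sq_def
    by (simp_all add: H4_add H4_diff H4_scale H4_delta monos4_eq)
  have evals: "evalf p_sq v = (p v)\<^sup>2" "evalf q_sq v = (q v)\<^sup>2"
    "evalf pq_sum_sq v = (p v + q v)\<^sup>2" for v
    by (cases v; simp add: p_def q_def p_sq_def q_sq_def pq_sum_sq_def evalf_add evalf_diff
        evalf_scale evalf_delta monos4_eq power2_eq_square algebra_simps)+
  have vanish: "p s = 0 \<and> q s = 0" if "s \<in> S" for s
    using that by (auto simp: S_def p_def q_def)
  show "p_sq \<in> fspan (FS S)" "q_sq \<in> fspan (FS S)"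
    using square_in_FS[OF forms(1) evals(1) conjunct1[OF vanish]]
      square_in_FS[OF forms(2) evals(2) conjunct2[OF vanish]]
    by (simp_all add: module.span_base[OF module_fscale])
  show "pq_prod \<in> fspan (FS S)"
    unfolding pq_prod_def by (rule polarization_in_span_FS[OF forms evals vanish])
qed

text \<open>The coefficients of a quartic singular at \<open>e\<^sub>1, \<dots>, e\<^sub>4\<close>: the coordinate points kill the
  monomials divisible by a cube, and the value and gradient at (1,1,1) express the remaining
  six coefficients through those of \<open>x\<^sup>2y\<^sup>2\<close>, \<open>x\<^sup>2z\<^sup>2\<close> and \<open>x\<^sup>2yz\<close>.\<close>

lemma four_point_coefficients:
  assumes "f \<in> IS {(1,0,0), (0,1,0), (0,0,1), (1,1,1)}"
  shows "f (4,0,0) = 0" "f (3,1,0) = 0" "f (3,0,1) = 0" "f (1,3,0) = 0" "f (0,4,0) = 0"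
    "f (0,3,1) = 0" "f (1,0,3) = 0" "f (0,1,3) = 0" "f (0,0,4) = 0"
    and "f (1,2,1) = - 2 * f (2,2,0) - f (2,1,1)" "f (1,1,2) = - 2 * f (2,0,2) - f (2,1,1)"
    "f (0,2,2) = f (2,2,0) + f (2,0,2) + f (2,1,1)"
proof -
  have ord: "ord_ge2 f (1,0,0)" "ord_ge2 f (0,1,0)" "ord_ge2 f (0,0,1)" "ord_ge2 f (1,1,1)"
    using assms by (auto simp: IS_def Ipt_def)
  have cubic_free: "f m = 0" if "m \<in> monos4" "3 \<le> fst m \<or> 3 \<le> fst (snd m) \<or> 3 \<le> snd (snd m)"
    for m
    using that coefficients_vanish_at_coordinate_points[OF that(1), of f] ord by auto
  then show zeros: "f (4,0,0) = 0" "f (3,1,0) = 0" "f (3,0,1) = 0" "f (1,3,0) = 0"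
    "f (0,4,0) = 0" "f (0,3,1) = 0" "f (1,0,3) = 0" "f (0,1,3) = 0" "f (0,0,4) = 0"
    by (simp_all add: monos4_eq)
  have "f (2,2,0) + f (2,0,2) + f (0,2,2) + f (2,1,1) + f (1,2,1) + f (1,1,2) = 0"
    "2 * f (2,2,0) + 2 * f (2,0,2) + 2 * f (2,1,1) + f (1,2,1) + f (1,1,2) = 0"
    "2 * f (2,2,0) + 2 * f (0,2,2) + f (2,1,1) + 2 * f (1,2,1) + f (1,1,2) = 0"
    "2 * f (2,0,2) + 2 * f (0,2,2) + f (2,1,1) + f (1,2,1) + 2 * f (1,1,2) = 0"
    using ord_ge2_gradient(1)[OF ord(4)] ord_ge2_gradient(2)[OF ord(4), of "(1,0,0)"]
      ord_ge2_gradient(2)[OF ord(4), of "(0,1,0)"] ord_ge2_gradient(2)[OF ord(4), of "(0,0,1)"]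
    by (simp_all add: evalf_monomials monos4_eq zeros flip: One_nat_def)
  then show "f (1,2,1) = - 2 * f (2,2,0) - f (2,1,1)" "f (1,1,2) = - 2 * f (2,0,2) - f (2,1,1)"
    "f (0,2,2) = f (2,2,0) + f (2,0,2) + f (2,1,1)"
    by linarith+
qed

theorem IS_subset_span_FS_four_points:
  "IS {(1,0,0), (0,1,0), (0,0,1), (1,1,1)} \<subseteq> fspan (FS {(1,0,0), (0,1,0), (0,0,1), (1,1,1)})"
proof
  interpret M: module fscale by (rule module_fscale)
  fix f assume f: "f \<in> IS {(1,0,0), (0,1,0), (0,0,1), (1,1,1)}"
  have expansion:
    "f = fscale (f (2,2,0)) p_sq + fscale (f (2,0,2)) q_sq + fscale (f (2,1,1)) pq_prod"
  proof
    fix k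
    show "f k = (fscale (f (2,2,0)) p_sq + fscale (f (2,0,2)) q_sq
        + fscale (f (2,1,1)) pq_prod) k"
    proof (cases "k \<in> monos4")
      case True
      then show ?thesis
        unfolding monos4_eq
        by (elim insertE emptyE; hypsubst; simp add: p_sq_def q_sq_def pq_sum_sq_def pq_prod_def
            delta_def fscale_def four_point_coefficients[OF f] flip: One_nat_def)
    next
      case False
      then have "f k = 0"
        using f unfolding IS_def H4_def by blast
      with False show ?thesis
        by (simp add: p_sq_def q_sq_def pq_sum_sq_def pq_prod_def delta_def fscale_def monos4_eq)
    qed
  qed
  show "f \<in> fspan (FS {(1,0,0), (0,1,0), (0,0,1), (1,1,1)})"
    by (subst expansion) (intro M.span_add M.span_scale four_point_quadrics_in_span)
qed

theorem mainTheorem9: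
  fixes e1 e2 e3 e4 :: "real \<times> real \<times> real"
  assumes "e1 = (1,0,0)" and "e2 = (0,1,0)" and "e3 = (0,0,1)" and "e4 = (1,1,1)"
  shows "\<forall>S \<in> {{e1}, {e1,e2}, {e1,e2,e3}, {e1,e2,e3,e4}}. fspan (FS S) = IS S"
proof -
  have coordinate: "fspan (FS S) = IS S" if "S \<subseteq> {(1,0,0), (0,1,0), (0,0,1)}" for S
    using span_FS_subset_IS IS_subset_span_FS_coordinate_points[OF that] by blast
  have four: "fspan (FS S) = IS S" if "S = {(1,0,0), (0,1,0), (0,0,1), (1,1,1)}" for S
    using span_FS_subset_IS IS_subset_span_FS_four_points unfolding that by blast
  show ?thesis
    unfolding assms using coordinate four by auto
qed

end
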